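(* Fix $k\in\mathbb{Z}_{\ge0}$. Let $S$ be a ubiquitously dense subset of $[0,\infty)$ and $R=(r_i)_{i\in\mathbb{Z}_{\ge0}}$ an $S$-gauge system on $\Omega$. Then the function $\tilde\Lambda^k[R]\colon N(\Omega)\times N(\Omega)\to[0,\infty)$ satisfies: (1) $\tilde\Lambda^k[R]\in\mathrm{Met}(N(\Omega))$; (2) the diameter of $N(\Omega)$ with respect to $\tilde\Lambda^k[R]$ is at most $2\cdot2^{-F_k(0)}=2^{-k}$; (3) $\tilde\Lambda^k[R]$ is complete; (4) $\tilde\Lambda^k[R]$ is strongly rigid.
   Context: A subset $S$ of $[0,\infty)$ is ubiquitously dense if $\operatorname{card}(U\cap S)=\operatorname{card}(S)$ for every non-empty open $U\subseteq[0,\infty)$. Fix a bijection $Q\colon\mathbb{Z}_{\ge0}\to\mathbb{Q}_{\ge0}$ with property (M): setting $\mu_m=\min Q^{-1}([m,m+1)\cap\mathbb{Q})$, we have $Q(\mu_m)=m$ and $\mu_m<\mu_{m+1}$ for all $m$. For a summable sequence $\alpha=(a_i)$ of positive reals and $B\subseteq\mathbb{Q}_{\ge0}$, $\langle\alpha,B\rangle=\sum_{i:\,Q(i)\in B}a_i$ ($=0$ if $B=\emptyset$). For $k\in\mathbb{Z}_{\ge0}$ let $F_k(n)=2^n+k$ and $\lambda^k_i=2^{-F_k(i)}$, $\lambda^k=(\lambda^k_i)_{i\ge0}$. $\Omega$ is a discrete space of cardinality $\mathfrak{c}$ and $N(\Omega)=\Omega^{\mathbb{Z}_{\ge0}}$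 with the product topology. For $T\subseteq[0,\infty)$, a $T$-semi-metric on a set $Y$ is a symmetric map $r\colon Y\times Y\to[0,\infty)$ with $r(x,y)=0$ iff $x=y$ and $r(x,y)\in T$ for $x\ne y$; it (or a metric) is strongly rigid if $r(x,y)=r(u,v)\neq0$ implies $\{x,y\}=\{u,v\}$. For dense $S\subseteq[0,\infty)$, an $S$-gauge system on $\Omega$ is a sequence $(r_i)_{i\ge0}$ with each $r_i$ a strongly rigid $(S\cap(i,i+1))$-semi-metric on $\Omega$. Put $J(m,t)=[m,t)\cap\mathbb{Q}$, $\Lambda^k_m[r](a,b)=\langle\lambda^k,J(m,r(a,b))\rangle$ for $a,b\in\Omega$, and for $x=(x_i),y=(y_i)\in N(\Omega)$, $\Lambda^k[R](x,y)=\sum_{m\ge0}\Lambda^k_m[r_m](x_m,y_m)=\langle\lambda^k,\bigsqcup_{m\ge0}J(m,r_m(x_m,y_m))\rangle$. For each $n\in\mathbb{Z}_{\ge0}$ fix an injective map $f_n\colon\Omega^{n+1}\to\Omega$, and define $\Phi\colon N(\Omega)\to N(\Omega)$ by $\Phi(x)_{2n}=x_n$, $\Phi(x)_{2n+1}=f_n(x_0,\dots,x_n)$. Finally $\tilde\Lambda^k[R](x,y)=\Lambda^k[R](\Phi(x),\Phi(y))$. $\mathrm{Met}(Y)$ is the set of metrics on $Y$ generating its topology. *)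

theory Defs
  imports "HOL-Analysis.Analysis" "HOL-Library.Equipollence"
begin

definition ubiq_dense :: "real set \<Rightarrow> bool" where
  "ubiq_dense S \<longleftrightarrow> S \<subseteq> {0..} \<and>
     (\<forall>U. openin (top_of_set {0..}) U \<and> U \<noteq> {} \<longrightarrow> (U \<inter> S) \<approx> S)"

definition mu :: "(nat \<Rightarrow> rat) \<Rightarrow> nat \<Rightarrow> nat" where
  "mu Q m = (LEAST i. of_nat m \<le> Q i \<and> Q i < of_nat m + 1)"

definition admissible_Q :: "(nat \<Rightarrow> rat) \<Rightarrow> bool" where
  "admissible_Q Q \<longleftrightarrow> bij_betw Q UNIV {q. 0 \<le> q} \<and>
     (\<forall>m. Q (mu Q m) = of_nat m \<and> mu Q m < mu Q (Suc m))"

definition bracket :: "(nat \<Rightarrow> rat) \<Rightarrow> (nat \<Rightarrow> real) \<Rightarrow> rat set \<Rightarrow> real" where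
  "bracket Q a B = (\<Sum>i. if Q i \<in> B then a i else 0)"

definition F :: "nat \<Rightarrow> nat \<Rightarrow> nat" where
  "F k n = 2 ^ n + k"

definition lam :: "nat \<Rightarrow> nat \<Rightarrow> real" where
  "lam k i = (1/2) ^ F k i"

definition J :: "nat \<Rightarrow> real \<Rightarrow> rat set" where
  "J m t = {q. real m \<le> real_of_rat q \<and> real_of_rat q < t}"

definition semi_metric_in :: "real set \<Rightarrow> ('a \<Rightarrow> 'a \<Rightarrow> real) \<Rightarrow> bool" where
  "semi_metric_in T r \<longleftrightarrow> (\<forall>x y. r x y = r y x) \<and> (\<forall>x y. r x y = 0 \<longleftrightarrow> x = y)
     \<and> (\<forall>x y. x \<noteq> y \<longrightarrow> r x y \<in> T)"

definition strongly_rigid :: "('a \<Rightarrow> 'a \<Rightarrow> real) \<Rightarrow> bool" where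
  "strongly_rigid r \<longleftrightarrow> (\<forall>x y u v. r x y = r u v \<and> r x y \<noteq> 0 \<longrightarrow> {x, y} = {u, v})"

definition gauge_system :: "real set \<Rightarrow> (nat \<Rightarrow> 'a \<Rightarrow> 'a \<Rightarrow> real) \<Rightarrow> bool" where
  "gauge_system S R \<longleftrightarrow> (\<forall>i. semi_metric_in (S \<inter> {real i<..<real i + 1}) (R i)
                                \<and> strongly_rigid (R i))"

definition Lam :: "nat \<Rightarrow> (nat \<Rightarrow> rat) \<Rightarrow> (nat \<Rightarrow> 'a \<Rightarrow> 'a \<Rightarrow> real)
                     \<Rightarrow> (nat \<Rightarrow> 'a) \<Rightarrow> (nat \<Rightarrow> 'a) \<Rightarrow> real" where
  "Lam k Q R x y = (\<Sum>m. bracket Q (lam k) (J m (R m (x m) (y m))))"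

text \<open>Phi, with f n : Omega^(n+1) -> Omega represented on lists of length n+1.\<close>
definition Phi :: "(nat \<Rightarrow> 'a list \<Rightarrow> 'a) \<Rightarrow> (nat \<Rightarrow> 'a) \<Rightarrow> nat \<Rightarrow> 'a" where
  "Phi f x j = (if even j then x (j div 2) else f (j div 2) (map x [0..<Suc (j div 2)]))"

definition Lam_tilde :: "nat \<Rightarrow> (nat \<Rightarrow> rat) \<Rightarrow> (nat \<Rightarrow> 'a list \<Rightarrow> 'a) \<Rightarrow> (nat \<Rightarrow> 'a \<Rightarrow> 'a \<Rightarrow> real)
                     \<Rightarrow> (nat \<Rightarrow> 'a) \<Rightarrow> (nat \<Rightarrow> 'a) \<Rightarrow> real" where
  "Lam_tilde k Q f R x y = Lam k Q R (Phi f x) (Phi f y)"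

text \<open>N(Omega): countable product of the discrete space Omega (= UNIV of 'a).\<close>
definition baire_top :: "(nat \<Rightarrow> 'a) topology" where
  "baire_top = product_topology (\<lambda>_. discrete_topology (UNIV :: 'a set)) UNIV"

definition Met :: "'b topology \<Rightarrow> ('b \<Rightarrow> 'b \<Rightarrow> real) set" where
  "Met X = {d. Metric_space (topspace X) d \<and> Metric_space.mtopology (topspace X) d = X}"

end

theory Submission
  imports Defs
begin

text \<open>
  \<open>\<Lambda>\<^sup>k[R](x, y)\<close> is the \<open>\<lambda>\<^sup>k\<close>-weight of the indices \<open>i\<close> with \<open>Q(i)\<close> in one of the pairwise
  disjoint intervals \<open>[m, r\<^sub>m(x\<^sub>m, y\<^sub>m))\<close>. The exponents \<open>2\<^sup>n + k\<close> grow so fast that each weight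
  exceeds the sum of all later ones, so the total weight determines the index set; since \<open>Q\<close> is
  onto the non-negative rationals, this set determines every \<open>J(m, r\<^sub>m(x\<^sub>m, y\<^sub>m))\<close> and hence every
  value \<open>r\<^sub>m(x\<^sub>m, y\<^sub>m)\<close>. Strong rigidity of the \<open>r\<^sub>m\<close> and injectivity of the \<open>f\<^sub>n\<close> then recover
  \<open>{x, y}\<close> from \<open>\<Lambda>\<^sup>k[R](\<Phi>(x), \<Phi>(y))\<close>.

  By property (M) the \<open>m\<close>-th interval starts at the index \<open>\<mu>\<^sub>m\<close>, so the \<open>m\<close>-th summand is \<open>0\<close> or
  lies between \<open>\<lambda>(\<mu>\<^sub>m)\<close> and \<open>2\<lambda>(\<mu>\<^sub>m)\<close>. This gives the triangle inequality summand by summand,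
  and shows that small balls are exactly the sets of sequences sharing a long prefix, so the
  metric induces the product topology and is complete.
\<close>

lemma summable_on_if_summable_nonneg:
  fixes a :: "nat \<Rightarrow> real"
  assumes "summable a" "\<And>i. 0 \<le> a i"
  shows "a summable_on A"
  using summable_on_subset_banach summable_nonneg_imp_summable_on assms by blast

lemma bracket_eq_infsum:
  fixes a :: "nat \<Rightarrow> real"
  assumes "summable a" "\<And>i. 0 \<le> a i"
  shows "bracket Q a B = (\<Sum>\<^sub>\<infinity>i\<in>{i. Q i \<in> B}. a i)"
proof -
  let ?g = "\<lambda>i. if Q i \<in> B then a i else 0"
  have "summable ?g"
    by (rule summable_comparison_test[OF _ assms(1)]) (use assms(2) in auto)
  then have "(?g has_sum bracket Q a B) UNIV"
    unfolding bracket_def by (intro sums_nonneg_imp_has_sum summable_sums) (use assms(2) in auto)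
  then have "(a has_sum bracket Q a B) {i. Q i \<in> B}"
    by (subst has_sum_cong_neutral[where g = ?g and T = UNIV]) auto
  then show ?thesis by (simp add: infsumI)
qed

lemma has_sum_disjoint_family:
  fixes a :: "'a \<Rightarrow> real"
  assumes "a summable_on (\<Union>m. A m)" and "disjoint_family A"
  shows "((\<lambda>m. \<Sum>\<^sub>\<infinity>i\<in>A m. a i) has_sum (\<Sum>\<^sub>\<infinity>i\<in>(\<Union>m. A m). a i)) UNIV"
proof -
  have bij: "bij_betw snd (Sigma UNIV A) (\<Union>m. A m)"
    using assms(2) by (auto simp: bij_betw_def inj_on_def disjoint_family_on_def image_iff)
  have "((\<lambda>p. a (snd p)) has_sum (\<Sum>\<^sub>\<infinity>i\<in>(\<Union>m. A m). a i)) (Sigma UNIV A)"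
    unfolding has_sum_reindex_bij_betw[OF bij] using assms(1) by (rule has_sum_infsum)
  then show ?thesis
    by (rule has_sum_Sigma') (auto intro!: has_sum_infsum summable_on_subset_banach[OF assms(1)])
qed

lemma infsum_less_if_first_difference:
  fixes a :: "nat \<Rightarrow> real"
  assumes "summable a" "\<And>i. 0 < a i" and tail: "(\<Sum>\<^sub>\<infinity>i\<in>{j<..}. a i) < a j"
    and "j \<in> A" "j \<notin> B" "\<And>i. i < j \<Longrightarrow> i \<in> A \<longleftrightarrow> i \<in> B"
  shows "(\<Sum>\<^sub>\<infinity>i\<in>B. a i) < (\<Sum>\<^sub>\<infinity>i\<in>A. a i)"
proof -
  have sum: "a summable_on C" for C
    using summable_on_if_summable_nonneg assms(1,2) less_imp_le by metis
  define C where "C = A \<inter> {..<j}"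
  have "(\<Sum>\<^sub>\<infinity>i\<in>B. a i) \<le> (\<Sum>\<^sub>\<infinity>i\<in>C \<union> {j<..}. a i)"
    using assms(5,6) by (intro infsum_mono2 sum)
      (auto simp: C_def less_imp_le[OF assms(2)] not_less_iff_gr_or_eq)
  also have "\<dots> = (\<Sum>\<^sub>\<infinity>i\<in>C. a i) + (\<Sum>\<^sub>\<infinity>i\<in>{j<..}. a i)"
    by (intro infsum_Un_disjoint sum) (auto simp: C_def)
  also have "\<dots> < (\<Sum>\<^sub>\<infinity>i\<in>C. a i) + a j"
    using tail by simp
  also have "\<dots> = (\<Sum>\<^sub>\<infinity>i\<in>C \<union> {j}. a i)"
    by (subst infsum_Un_disjoint) (auto simp: C_def sum)
  also have "\<dots> \<le> (\<Sum>\<^sub>\<infinity>i\<in>A. a i)"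
    using assms(4) by (intro infsum_mono2 sum) (auto simp: C_def less_imp_le[OF assms(2)])
  finally show ?thesis .
qed

lemma infsum_index_set_inj:
  fixes a :: "nat \<Rightarrow> real"
  assumes "summable a" "\<And>i. 0 < a i" and tail: "\<And>j. (\<Sum>\<^sub>\<infinity>i\<in>{j<..}. a i) < a j"
    and eq: "(\<Sum>\<^sub>\<infinity>i\<in>A. a i) = (\<Sum>\<^sub>\<infinity>i\<in>B. a i)"
  shows "A = B"
proof (rule ccontr)
  assume "A \<noteq> B"
  then have ex: "\<exists>i. i \<in> A \<longleftrightarrow> i \<notin> B" by blast
  define j where "j = (LEAST i. i \<in> A \<longleftrightarrow> i \<notin> B)"
  have j: "j \<in> A \<longleftrightarrow> j \<notin> B"
    unfolding j_def using LeastI_ex[OF ex] .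
  have below: "\<And>i. i < j \<Longrightarrow> i \<in> A \<longleftrightarrow> i \<in> B"
    unfolding j_def using not_less_Least by blast
  show False
    using infsum_less_if_first_difference[OF assms(1,2) tail, of j A B]
      infsum_less_if_first_difference[OF assms(1,2) tail, of j B A] j below eq
    by (cases "j \<in> A") auto
qed

lemma lam_pos: "0 < lam k i"
  by (simp add: lam_def)

lemma lam_antimono: "i \<le> j \<Longrightarrow> lam k j \<le> lam k i"
  unfolding lam_def F_def by (intro power_decreasing) auto

lemma summable_lam: "summable (lam k)"
proof (rule summable_comparison_test[OF _ summable_geometric[of "1/2"]])
  have "i \<le> 2 ^ i + k" for i
    using less_exp[of i] by linarith
  then have "lam k i \<le> (1/2) ^ i" for i
    unfolding lam_def F_def by (intro power_decreasing) auto
  then show "\<exists>N. \<forall>i\<ge>N. norm (lam k i) \<le> (1/2) ^ i"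
    by (simp add: less_imp_le[OF lam_pos])
qed simp

lemma lam_summable_on: "lam k summable_on A"
  using summable_on_if_summable_nonneg[OF summable_lam] lam_pos less_imp_le by metis

lemma two_power_add_Suc_ge: "(2::nat) ^ j + 2 * l + 1 \<le> 2 ^ (j + Suc l)"
proof -
  have "2 * l + 2 \<le> (2::nat) ^ Suc l"
    using less_exp[of l] by (simp only: power_Suc)
  moreover have "(2::nat) ^ j + 2 ^ Suc l \<le> 2 ^ j * 2 ^ Suc l + 1"
    by (cases "(2::nat) ^ j") auto
  ultimately show ?thesis by (simp only: power_add)
qed

lemma lam_add_Suc_le: "lam k (j + Suc l) \<le> lam k j / 2 * (1/4) ^ l"
proof -
  have "lam k (j + Suc l) \<le> (1/2) ^ (2 ^ j + k + 1 + 2 * l)"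
    unfolding lam_def F_def using two_power_add_Suc_ge[of j l] by (intro power_decreasing) auto
  also have "\<dots> = lam k j / 2 * (1/4) ^ l"
    by (simp add: lam_def F_def power_add power_mult power2_eq_square)
  finally show ?thesis .
qed

lemma lam_tail_less: "(\<Sum>\<^sub>\<infinity>i\<in>{j<..}. lam k i) < lam k j"
proof -
  have bij: "bij_betw (\<lambda>l. j + Suc l) UNIV {j<..}"
    by (rule bij_betwI[where g = "\<lambda>i. i - Suc j"]) auto
  have geom: "((\<lambda>l. lam k j / 2 * (1/4) ^ l) has_sum 2 * lam k j / 3) UNIV"
    using sums_mult[OF geometric_sums[of "1/4::real"], of "lam k j / 2"]
    by (intro sums_nonneg_imp_has_sum) (auto simp: less_imp_le[OF lam_pos])
  have "(\<Sum>\<^sub>\<infinity>i\<in>{j<..}. lam k i) = (\<Sum>\<^sub>\<infinity>l. lam k (j + Suc l))"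
    using infsum_reindex_bij_betw[OF bij, of "lam k", symmetric] by simp
  also have "\<dots> \<le> (\<Sum>\<^sub>\<infinity>l. lam k j / 2 * (1/4) ^ l)"
  proof (rule infsum_mono[OF _ has_sum_imp_summable[OF geom] lam_add_Suc_le])
    show "(\<lambda>l. lam k (j + Suc l)) summable_on UNIV"
      using summable_on_reindex_bij_betw[OF bij] lam_summable_on by blast
  qed
  also have "\<dots> = 2 * lam k j / 3"
    using geom by (rule infsumI)
  finally show ?thesis using lam_pos[of k j] by linarith
qed

lemma lam_infsum_atLeast_le: "(\<Sum>\<^sub>\<infinity>i\<in>{j..}. lam k i) \<le> 2 * lam k j"
proof -
  have "{j..} = {j} \<union> {j<..}" by auto
  then have "(\<Sum>\<^sub>\<infinity>i\<in>{j..}. lam k i) = lam k j + (\<Sum>\<^sub>\<infinity>i\<in>{j<..}. lam k i)"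
    using infsum_Un_disjoint[of "lam k" "{j}" "{j<..}"] by (simp add: lam_summable_on)
  then show ?thesis using lam_tail_less[of k j] by simp
qed

lemma lam_infsum_inj: "(\<Sum>\<^sub>\<infinity>i\<in>A. lam k i) = (\<Sum>\<^sub>\<infinity>i\<in>B. lam k i) \<Longrightarrow> A = B"
  by (rule infsum_index_set_inj[OF summable_lam lam_pos lam_tail_less])

lemma lam_le_infsum: "i \<in> A \<Longrightarrow> lam k i \<le> (\<Sum>\<^sub>\<infinity>j\<in>A. lam k j)"
  using infsum_mono2[of "lam k" "{i}" A] by (simp add: lam_summable_on less_imp_le[OF lam_pos])

lemma J_empty_if_le: "t \<le> real m \<Longrightarrow> J m t = {}"
  unfolding J_def by auto

lemma J_inj_on: "inj_on (J m) ({0} \<union> {real m<..})"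
proof -
  have neq: "J m s \<noteq> J m t" if "s < t" "real m < t" for s t
  proof -
    have "max s (real m) < t" using that by simp
    then obtain q where q: "max s (real m) < of_rat q" "of_rat q < t"
      using of_rat_dense by blast
    then have "q \<in> J m t" "q \<notin> J m s"
      unfolding J_def by auto
    then show ?thesis by blast
  qed
  show ?thesis
  proof (rule inj_onI)
    fix s t assume "s \<in> {0} \<union> {real m<..}" "t \<in> {0} \<union> {real m<..}" "J m s = J m t"
    then show "s = t"
      using neq[of s t] neq[of t s] by (cases s t rule: linorder_cases) auto
  qed
qed

lemma in_J_iff: "q \<in> J m t \<longleftrightarrow> of_nat m \<le> q \<and> of_rat q < t"
proof -
  have "real m = of_rat (of_nat m)" by simp
  then show ?thesis unfolding J_def by (metis mem_Collect_eq of_rat_less_eq)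
qed

lemma nonneg_if_in_J: "q \<in> J m t \<Longrightarrow> 0 \<le> q"
  using in_J_iff by (metis of_nat_0_le_iff order_trans)

locale gauge_metric =
  fixes k :: nat and Q :: "nat \<Rightarrow> rat" and S :: "real set"
    and R :: "nat \<Rightarrow> 'w \<Rightarrow> 'w \<Rightarrow> real"
  assumes admissible: "admissible_Q Q" and gauge: "gauge_system S R"
begin

lemma Q_onto_nonneg: "0 \<le> q \<Longrightarrow> q \<in> range Q"
  using admissible unfolding admissible_Q_def bij_betw_def by auto

lemma Q_mu: "Q (mu Q m) = of_nat m"
  using admissible by (simp add: admissible_Q_def)

lemma strict_mono_mu: "strict_mono (mu Q)"
  using admissible by (simp add: admissible_Q_def strict_mono_Suc_iff)

lemma mu_least: "of_nat m \<le> Q i \<Longrightarrow> Q i < of_nat m + 1 \<Longrightarrow> mu Q m \<le> i"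
  unfolding mu_def by (rule Least_le) simp

lemma R_sym: "R m a b = R m b a"
  and R_eq_0_iff: "R m a b = 0 \<longleftrightarrow> a = b"
  and R_bounds: "a \<noteq> b \<Longrightarrow> real m < R m a b \<and> R m a b < real m + 1"
  and R_strongly_rigid: "strongly_rigid (R m)"
  using gauge unfolding gauge_system_def semi_metric_in_def by simp_all

definition block :: "nat \<Rightarrow> nat set" where
  "block m = {i. of_nat m \<le> Q i \<and> Q i < of_nat m + 1}"

definition gauge_support :: "nat \<Rightarrow> 'w \<Rightarrow> 'w \<Rightarrow> nat set" where
  "gauge_support m a b = {i. Q i \<in> J m (R m a b)}"

lemma gauge_support_sym: "gauge_support m a b = gauge_support m b a"
  unfolding gauge_support_def using R_sym by simp

lemma gauge_support_self: "gauge_support m a a = {}"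
  unfolding gauge_support_def using R_eq_0_iff[of m a a] by (simp add: J_empty_if_le)

lemma gauge_support_subset_block: "gauge_support m a b \<subseteq> block m"
proof
  fix i assume "i \<in> gauge_support m a b"
  moreover have "R m a b < real m + 1"
    using R_bounds[of a b m] R_eq_0_iff[of m a b] by (cases "a = b") auto
  ultimately have "of_nat m \<le> Q i" "of_rat (Q i) < (of_rat (of_nat m + 1) :: real)"
    unfolding gauge_support_def in_J_iff by (auto simp: of_rat_add)
  then show "i \<in> block m"
    unfolding block_def of_rat_less by simp
qed

lemma mu_in_gauge_support: "a \<noteq> b \<Longrightarrow> mu Q m \<in> gauge_support m a b"
  unfolding gauge_support_def in_J_iff using R_bounds[of a b m] by (simp add: Q_mu)

lemma block_subset_atLeast_mu: "block m \<subseteq> {mu Q m..}"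
  unfolding block_def using mu_least by auto

lemma block_index_le: "i \<in> block m \<Longrightarrow> i \<in> block n \<Longrightarrow> m \<le> n"
proof -
  assume "i \<in> block m" "i \<in> block n"
  then have "(of_nat m :: rat) < of_nat (Suc n)"
    unfolding block_def by auto
  then show "m \<le> n" by (simp only: of_nat_less_iff less_Suc_eq_le)
qed

lemma disjoint_family_block: "disjoint_family block"
  unfolding disjoint_family_on_def using block_index_le by (blast intro: le_antisym)

definition Lam_coord :: "nat \<Rightarrow> 'w \<Rightarrow> 'w \<Rightarrow> real" where
  "Lam_coord m a b = (\<Sum>\<^sub>\<infinity>i\<in>gauge_support m a b. lam k i)"

lemma bracket_eq_Lam_coord: "bracket Q (lam k) (J m (R m a b)) = Lam_coord m a b"
  unfolding Lam_coord_def gauge_support_def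
  using bracket_eq_infsum[OF summable_lam] lam_pos less_imp_le by metis

lemma Lam_coord_ge: "a \<noteq> b \<Longrightarrow> lam k (mu Q m) \<le> Lam_coord m a b"
  unfolding Lam_coord_def by (intro lam_le_infsum mu_in_gauge_support)

lemma Lam_coord_le: "Lam_coord m a b \<le> 2 * lam k (mu Q m)"
proof -
  have "gauge_support m a b \<subseteq> {mu Q m..}"
    using gauge_support_subset_block block_subset_atLeast_mu by (rule order_trans)
  then have "Lam_coord m a b \<le> (\<Sum>\<^sub>\<infinity>i\<in>{mu Q m..}. lam k i)"
    unfolding Lam_coord_def by (intro infsum_mono2 lam_summable_on) (auto simp: less_imp_le[OF lam_pos])
  then show ?thesis using lam_infsum_atLeast_le by (rule order_trans)
qed

lemma Lam_coord_nonneg: "0 \<le> Lam_coord m a b"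
  unfolding Lam_coord_def by (simp add: infsum_nonneg less_imp_le[OF lam_pos])

text \<open>Both summands on the right are at least \<open>\<lambda>(\<mu>\<^sub>m)\<close> unless one vanishes, whereas the left
  side is at most \<open>2 \<lambda>(\<mu>\<^sub>m)\<close>.\<close>

lemma Lam_coord_triangle: "Lam_coord m a c \<le> Lam_coord m a b + Lam_coord m b c"
proof (cases "a = b \<or> b = c")
  case True
  then show ?thesis by (auto simp: Lam_coord_def gauge_support_self Lam_coord_nonneg)
next
  case False
  then show ?thesis
    using Lam_coord_ge[of a b m] Lam_coord_ge[of b c m] Lam_coord_le[of m a c] by linarith
qed

definition Lam_support :: "(nat \<Rightarrow> 'w) \<Rightarrow> (nat \<Rightarrow> 'w) \<Rightarrow> nat set" where
  "Lam_support X Y = (\<Union>m. gauge_support m (X m) (Y m))"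

lemma Lam_coord_sums: "(\<lambda>m. Lam_coord m (X m) (Y m)) sums (\<Sum>\<^sub>\<infinity>i\<in>Lam_support X Y. lam k i)"
proof -
  have "disjoint_family (\<lambda>m. gauge_support m (X m) (Y m))"
    by (rule disjoint_family_subset[OF disjoint_family_block gauge_support_subset_block])
  then show ?thesis
    unfolding Lam_coord_def Lam_support_def
    by (intro has_sum_imp_sums has_sum_disjoint_family lam_summable_on)
qed

lemma Lam_eq_infsum: "Lam k Q R X Y = (\<Sum>\<^sub>\<infinity>i\<in>Lam_support X Y. lam k i)"
  unfolding Lam_def bracket_eq_Lam_coord using Lam_coord_sums by (rule sums_unique[symmetric])

lemma Lam_sums: "(\<lambda>m. Lam_coord m (X m) (Y m)) sums Lam k Q R X Y"
  unfolding Lam_eq_infsum by (rule Lam_coord_sums)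

lemma Lam_self: "Lam k Q R X X = 0"
  by (simp add: Lam_eq_infsum Lam_support_def gauge_support_self)

lemma Lam_sym: "Lam k Q R X Y = Lam k Q R Y X"
  by (simp add: Lam_eq_infsum Lam_support_def gauge_support_sym)

lemma Lam_nonneg: "0 \<le> Lam k Q R X Y"
  unfolding Lam_eq_infsum by (simp add: infsum_nonneg less_imp_le[OF lam_pos])

lemma Lam_triangle: "Lam k Q R X Z \<le> Lam k Q R X Y + Lam k Q R Y Z"
  by (rule sums_le[OF _ Lam_sums sums_add[OF Lam_sums Lam_sums]]) (rule Lam_coord_triangle)

lemma Lam_ge: "X m \<noteq> Y m \<Longrightarrow> lam k (mu Q m) \<le> Lam k Q R X Y"
  unfolding Lam_eq_infsum Lam_support_def by (intro lam_le_infsum UN_I[of m UNIV] UNIV_I mu_in_gauge_support)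

lemma Lam_eq_0_iff: "Lam k Q R X Y = 0 \<longleftrightarrow> X = Y"
  using Lam_ge lam_pos Lam_self by (metis ext not_le)

lemma Lam_le_if_agree:
  assumes "\<forall>m<N. X m = Y m"
  shows "Lam k Q R X Y \<le> 2 * lam k N"
proof -
  have "gauge_support m (X m) (Y m) \<subseteq> {mu Q N..}" for m
  proof (cases "m < N")
    case True
    then show ?thesis using assms by (simp add: gauge_support_self)
  next
    case False
    then have "mu Q N \<le> mu Q m" using strict_mono_mu by (simp add: strict_mono_less_eq)
    then show ?thesis using gauge_support_subset_block block_subset_atLeast_mu by fastforce
  qed
  then have "Lam k Q R X Y \<le> (\<Sum>\<^sub>\<infinity>i\<in>{mu Q N..}. lam k i)"
    unfolding Lam_eq_infsum Lam_support_def
    by (intro infsum_mono2 lam_summable_on) (auto simp: less_imp_le[OF lam_pos])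
  also have "\<dots> \<le> 2 * lam k (mu Q N)" by (rule lam_infsum_atLeast_le)
  also have "\<dots> \<le> 2 * lam k N"
    using lam_antimono[OF strict_mono_imp_increasing[OF strict_mono_mu]] by simp
  finally show ?thesis .
qed

lemma Lam_le: "Lam k Q R X Y \<le> 2 * lam k 0"
  using Lam_le_if_agree[of 0] by simp

lemma gauge_support_eq: "gauge_support m (X m) (Y m) = Lam_support X Y \<inter> block m"
proof
  show "gauge_support m (X m) (Y m) \<subseteq> Lam_support X Y \<inter> block m"
    using gauge_support_subset_block unfolding Lam_support_def by blast
  show "Lam_support X Y \<inter> block m \<subseteq> gauge_support m (X m) (Y m)"
  proof
    fix i assume "i \<in> Lam_support X Y \<inter> block m"
    then obtain n where n: "i \<in> gauge_support n (X n) (Y n)" "i \<in> block m"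
      unfolding Lam_support_def by blast
    then have "n = m"
      using disjoint_family_onD[OF disjoint_family_block, of n m] gauge_support_subset_block by blast
    with n show "i \<in> gauge_support m (X m) (Y m)" by simp
  qed
qed

lemma Lam_eq_imp_R_eq:
  assumes "Lam k Q R X Y = Lam k Q R U V"
  shows "R m (X m) (Y m) = R m (U m) (V m)"
proof -
  have "Lam_support X Y = Lam_support U V"
    using assms by (simp add: Lam_eq_infsum lam_infsum_inj)
  then have "gauge_support m (X m) (Y m) = gauge_support m (U m) (V m)"
    by (simp add: gauge_support_eq)
  then have "J m (R m (X m) (Y m)) = J m (R m (U m) (V m))"
    unfolding gauge_support_def using Q_onto_nonneg nonneg_if_in_J by blast
  moreover have "R m a b \<in> {0} \<union> {real m<..}" for a b
    using R_bounds[of a b m] R_eq_0_iff[of m a b] by (cases "a = b") auto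
  ultimately show ?thesis using J_inj_on inj_on_def by metis
qed

end

lemma Phi_even: "Phi f x (2 * i) = x i"
  unfolding Phi_def by simp

lemma Phi_odd: "Phi f x (Suc (2 * i)) = f i (map x [0..<Suc i])"
  unfolding Phi_def by simp

lemma Phi_inj: "Phi f x = Phi f y \<Longrightarrow> x = y"
  by (metis Phi_even ext)

lemma map_upt_eq_iff: "map x [0..<n] = map y [0..<n] \<longleftrightarrow> (\<forall>i<n. x i = y i)"
  by (auto simp: list_eq_iff_nth_eq)

lemma Phi_agree: "\<forall>i<N. x i = y i \<Longrightarrow> m < N \<Longrightarrow> Phi f x m = Phi f y m"
  unfolding Phi_def by (subst map_upt_eq_iff[THEN iffD2]) auto

lemma doubleton_eq_if_prefixes_match:
  fixes x y u v :: "nat \<Rightarrow> 'a"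
  assumes "x n\<^sub>0 \<noteq> y n\<^sub>0"
    and match: "\<And>n. n\<^sub>0 \<le> n \<Longrightarrow>
      (\<forall>i\<le>n. x i = u i \<and> y i = v i) \<or> (\<forall>i\<le>n. x i = v i \<and> y i = u i)"
  shows "{x, y} = {u, v}"
proof -
  have straight: "x = p \<and> y = q"
    if start: "\<forall>i\<le>n\<^sub>0. x i = p i \<and> y i = q i"
      and match: "\<And>n. n\<^sub>0 \<le> n \<Longrightarrow>
        (\<forall>i\<le>n. x i = p i \<and> y i = q i) \<or> (\<forall>i\<le>n. x i = q i \<and> y i = p i)" for p q
  proof -
    have "\<forall>i\<le>n. x i = p i \<and> y i = q i" if "n\<^sub>0 \<le> n" for n
      using match[OF that] start assms(1) that by (metis order_refl)
    then show ?thesis by (metis ext max.cobounded1 max.cobounded2)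
  qed
  show ?thesis
    using match[of n\<^sub>0] straight[of u v] straight[of v u] match by (auto simp: disj_commute)
qed

lemma openin_baire_top_iff:
  "openin baire_top T \<longleftrightarrow> (\<forall>x\<in>T. \<exists>N. {y. \<forall>i<N. x i = y i} \<subseteq> T)"
proof -
  have "openin baire_top T \<longleftrightarrow>
      (\<forall>x\<in>T. \<exists>U. finite {i. U i \<noteq> UNIV} \<and> x \<in> Pi UNIV U \<and> Pi UNIV U \<subseteq> T)"
    unfolding baire_top_def openin_product_topology_alt by (simp add: PiE_UNIV_domain)
  also have "\<dots> \<longleftrightarrow> (\<forall>x\<in>T. \<exists>N. {y. \<forall>i<N. x i = y i} \<subseteq> T)"
  proof (intro ball_cong[OF refl] iffI)
    fix x assume "\<exists>U. finite {i. U i \<noteq> UNIV} \<and> x \<in> Pi UNIV U \<and> Pi UNIV U \<subseteq> T"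
    then obtain U where U: "finite {i. U i \<noteq> UNIV}" "x \<in> Pi UNIV U" "Pi UNIV U \<subseteq> T" by blast
    obtain N where N: "{i. U i \<noteq> UNIV} \<subseteq> {..<N}" using finite_nat_bounded[OF U(1)] by blast
    have "{y. \<forall>i<N. x i = y i} \<subseteq> Pi UNIV U"
    proof (intro subsetI Pi_I)
      fix y i assume y: "y \<in> {y. \<forall>i<N. x i = y i}"
      show "y i \<in> U i"
      proof (cases "i < N")
        case True
        then show ?thesis using y Pi_mem[OF U(2) UNIV_I, of i] by simp
      next
        case False
        then show ?thesis using N by blast
      qed
    qed
    then have "{y. \<forall>i<N. x i = y i} \<subseteq> T" using U(3) by (rule order_trans)
    then show "\<exists>N. {y. \<forall>i<N. x i = y i} \<subseteq> T" ..
  next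
    fix x assume "\<exists>N. {y. \<forall>i<N. x i = y i} \<subseteq> T"
    then obtain N where N: "{y. \<forall>i<N. x i = y i} \<subseteq> T" by blast
    define U where "U i = (if i < N then {x i} else UNIV)" for i
    have "finite {i. U i \<noteq> UNIV}" by (rule finite_subset[of _ "{..<N}"]) (auto simp: U_def)
    moreover have "Pi UNIV U = {y. \<forall>i<N. x i = y i}"
      by (auto simp: U_def Pi_iff) (metis singletonD)
    ultimately show "\<exists>U. finite {i. U i \<noteq> UNIV} \<and> x \<in> Pi UNIV U \<and> Pi UNIV U \<subseteq> T"
      using N by blast
  qed
  finally show ?thesis .
qed

lemma mtopology_eq_baire_top:
  fixes d :: "(nat \<Rightarrow> 'a) \<Rightarrow> (nat \<Rightarrow> 'a) \<Rightarrow> real"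
  assumes "Metric_space UNIV d"
    and close: "\<And>e. e > 0 \<Longrightarrow> \<exists>N. \<forall>x y. (\<forall>i<N. x i = y i) \<longrightarrow> d x y < e"
    and separate: "\<And>N. \<exists>r>0. \<forall>x y. d x y < r \<longrightarrow> (\<forall>i<N. x i = y i)"
  shows "Metric_space.mtopology UNIV d = (baire_top :: (nat \<Rightarrow> 'a) topology)"
proof -
  interpret Metric_space UNIV d by fact
  have "(\<exists>r>0. mball x r \<subseteq> T) \<longleftrightarrow> (\<exists>N. {y. \<forall>i<N. x i = y i} \<subseteq> T)" for x T
  proof
    assume "\<exists>r>0. mball x r \<subseteq> T"
    then obtain r where r: "r > 0" "mball x r \<subseteq> T" by blast
    obtain N where "\<forall>y. (\<forall>i<N. x i = y i) \<longrightarrow> d x y < r" using close[OF r(1)] by blast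
    then have "{y. \<forall>i<N. x i = y i} \<subseteq> mball x r" by auto
    then have "{y. \<forall>i<N. x i = y i} \<subseteq> T" using r(2) by (rule order_trans)
    then show "\<exists>N. {y. \<forall>i<N. x i = y i} \<subseteq> T" ..
  next
    assume "\<exists>N. {y. \<forall>i<N. x i = y i} \<subseteq> T"
    then obtain N where N: "{y. \<forall>i<N. x i = y i} \<subseteq> T" by blast
    obtain r where r: "r > 0" "\<forall>y. d x y < r \<longrightarrow> (\<forall>i<N. x i = y i)"
      using separate[of N] by blast
    then have "mball x r \<subseteq> {y. \<forall>i<N. x i = y i}" by auto
    then have "mball x r \<subseteq> T" using N by (rule order_trans)
    then show "\<exists>r>0. mball x r \<subseteq> T" using r(1) by blast
  qed
  then show ?thesis
    unfolding topology_eq openin_mtopology openin_baire_top_iff by auto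
qed

lemma mcomplete_if_prefix_controlled:
  fixes d :: "(nat \<Rightarrow> 'a) \<Rightarrow> (nat \<Rightarrow> 'a) \<Rightarrow> real"
  assumes "Metric_space UNIV d"
    and close: "\<And>e. e > 0 \<Longrightarrow> \<exists>N. \<forall>x y. (\<forall>i<N. x i = y i) \<longrightarrow> d x y < e"
    and separate: "\<And>N. \<exists>r>0. \<forall>x y. d x y < r \<longrightarrow> (\<forall>i<N. x i = y i)"
  shows "Metric_space.mcomplete UNIV d"
proof -
  interpret Metric_space UNIV d by fact
  show ?thesis
    unfolding mcomplete_def
  proof (intro allI impI)
    fix \<sigma> :: "nat \<Rightarrow> nat \<Rightarrow> 'a" assume Cauchy: "MCauchy \<sigma>"
    have "\<exists>P. \<forall>p q. P \<le> p \<longrightarrow> P \<le> q \<longrightarrow> (\<forall>i<n. \<sigma> p i = \<sigma> q i)" for n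
    proof -
      obtain r where "r > 0" "\<And>x y. d x y < r \<Longrightarrow> \<forall>i<n. x i = y i" using separate[of n] by blast
      then show ?thesis using Cauchy unfolding MCauchy_def by meson
    qed
    then obtain P where P: "\<And>n p q i. P n \<le> p \<Longrightarrow> P n \<le> q \<Longrightarrow> i < n \<Longrightarrow> \<sigma> p i = \<sigma> q i"
      by metis
    define l where "l i = \<sigma> (P (Suc i)) i" for i
    have stable: "\<sigma> p i = l i" if "P (Suc i) \<le> p" for p i
      unfolding l_def using P[of "Suc i" p "P (Suc i)" i] that by simp
    have "limitin mtopology \<sigma> l sequentially"
      unfolding limitin_metric
    proof (intro conjI allI impI)
      fix e :: real assume "e > 0"
      then obtain M where M: "\<And>x y. \<forall>i<M. x i = y i \<Longrightarrow> d x y < e" using close by blast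
      have "d (\<sigma> p) l < e" if "Max (P ` {..M}) \<le> p" for p
        using that by (intro M allI impI stable) (auto intro: order_trans[OF Max_ge])
      then show "\<forall>\<^sub>F p in sequentially. \<sigma> p \<in> UNIV \<and> d (\<sigma> p) l < e"
        unfolding eventually_sequentially by blast
    qed auto
    then show "\<exists>x. limitin mtopology \<sigma> x sequentially" by blast
  qed
qed

context gauge_metric
begin

lemma Lam_tilde_metric: "Metric_space UNIV (Lam_tilde k Q f R)"
  by unfold_locales
    (auto simp: Lam_tilde_def Lam_nonneg Lam_sym Lam_eq_0_iff Phi_inj intro: Lam_triangle)

lemma Lam_tilde_close:
  assumes "e > 0"
  shows "\<exists>N. \<forall>x y. (\<forall>i<N. x i = y i) \<longrightarrow> Lam_tilde k Q f R x y < e"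
proof -
  have "(\<lambda>N. 2 * lam k N) \<longlonglongrightarrow> 0"
    using tendsto_mult_right_zero[OF summable_LIMSEQ_zero[OF summable_lam]] .
  then have "\<forall>\<^sub>F N in sequentially. 2 * lam k N < e"
    using assms by (rule order_tendstoD)
  then obtain N where "2 * lam k N < e"
    by (auto simp: eventually_sequentially)
  moreover have "Lam_tilde k Q f R x y \<le> 2 * lam k N" if "\<forall>i<N. x i = y i" for x y
    unfolding Lam_tilde_def by (intro Lam_le_if_agree allI impI Phi_agree[OF that])
  ultimately show ?thesis by (meson le_less_trans)
qed

lemma Lam_tilde_separate: "\<exists>r>0. \<forall>x y. Lam_tilde k Q f R x y < r \<longrightarrow> (\<forall>i<N. x i = y i)"
proof (intro exI conjI allI impI)
  fix x y i assume close: "Lam_tilde k Q f R x y < lam k (mu Q (2 * N))" and "i < N"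
  show "x i = y i"
  proof (rule ccontr)
    assume "x i \<noteq> y i"
    then have "lam k (mu Q (2 * i)) \<le> Lam_tilde k Q f R x y"
      unfolding Lam_tilde_def by (intro Lam_ge) (simp add: Phi_even)
    moreover have "lam k (mu Q (2 * N)) \<le> lam k (mu Q (2 * i))"
      using \<open>i < N\<close> strict_mono_mu by (intro lam_antimono) (simp add: strict_mono_less_eq)
    ultimately show False using close by linarith
  qed
qed (rule lam_pos)

text \<open>The odd coordinates of \<open>\<Phi>\<close> encode ever longer prefixes injectively, so strong rigidity
  of each \<open>r\<^sub>m\<close> matches the prefixes of \<open>x, y\<close> with those of \<open>u, v\<close>.\<close>

lemma prefixes_match_if_Lam_tilde_eq:
  assumes f_inj: "inj_on (f n) {xs. length xs = Suc n}"
    and eq: "Lam_tilde k Q f R x y = Lam_tilde k Q f R u v"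
    and differ: "\<not> (\<forall>i\<le>n. x i = y i)"
  shows "(\<forall>i\<le>n. x i = u i \<and> y i = v i) \<or> (\<forall>i\<le>n. x i = v i \<and> y i = u i)"
proof -
  let ?code = "\<lambda>z. f n (map z [0..<Suc n])"
  have code_eq: "?code a = ?code b \<longleftrightarrow> (\<forall>i\<le>n. a i = b i)" for a b :: "nat \<Rightarrow> 'w"
  proof -
    have "?code a = ?code b \<longleftrightarrow> map a [0..<Suc n] = map b [0..<Suc n]"
      using f_inj by (intro inj_on_eq_iff) auto
    also have "\<dots> \<longleftrightarrow> (\<forall>i\<le>n. a i = b i)"
      unfolding map_upt_eq_iff less_Suc_eq_le ..
    finally show ?thesis .
  qed
  have "R (Suc (2 * n)) (?code x) (?code y) \<noteq> 0"
    using differ code_eq R_eq_0_iff by blast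
  moreover have "R (Suc (2 * n)) (?code x) (?code y) = R (Suc (2 * n)) (?code u) (?code v)"
    using Lam_eq_imp_R_eq[of "Phi f x" "Phi f y" "Phi f u" "Phi f v" "Suc (2 * n)"] eq
    by (simp add: Lam_tilde_def Phi_odd)
  ultimately have "{?code x, ?code y} = {?code u, ?code v}"
    using R_strongly_rigid unfolding strongly_rigid_def by blast
  then show ?thesis
    unfolding doubleton_eq_iff code_eq by blast
qed

lemma Lam_tilde_strongly_rigid:
  assumes "\<And>n. inj_on (f n) {xs. length xs = Suc n}"
  shows "strongly_rigid (Lam_tilde k Q f R)"
  unfolding strongly_rigid_def
proof (intro allI impI)
  fix x y u v :: "nat \<Rightarrow> 'w"
  assume eq: "Lam_tilde k Q f R x y = Lam_tilde k Q f R u v \<and> Lam_tilde k Q f R x y \<noteq> 0"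
  then have "x \<noteq> y"
    unfolding Lam_tilde_def using Lam_self by metis
  then obtain n\<^sub>0 where "x n\<^sub>0 \<noteq> y n\<^sub>0"
    by (auto simp: fun_eq_iff)
  moreover have "(\<forall>i\<le>n. x i = u i \<and> y i = v i) \<or> (\<forall>i\<le>n. x i = v i \<and> y i = u i)"
    if "n\<^sub>0 \<le> n" for n
    using that \<open>x n\<^sub>0 \<noteq> y n\<^sub>0\<close> eq by (intro prefixes_match_if_Lam_tilde_eq[OF assms]) auto
  ultimately show "{x, y} = {u, v}"
    by (rule doubleton_eq_if_prefixes_match)
qed

end

theorem theorem4p20:
  fixes k :: nat and S :: "real set" and Q :: "nat \<Rightarrow> rat"
    and R :: "nat \<Rightarrow> 'w \<Rightarrow> 'w \<Rightarrow> real" and f :: "nat \<Rightarrow> 'w list \<Rightarrow> 'w"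
  assumes Omega_card: "(UNIV :: 'w set) \<approx> (UNIV :: real set)"
    and Q: "admissible_Q Q"
    and f_inj: "\<And>n. inj_on (f n) {xs. length xs = Suc n}"
    and S: "ubiq_dense S"
    and R: "gauge_system S R"
  shows "Lam_tilde k Q f R \<in> Met (baire_top :: (nat \<Rightarrow> 'w) topology)
         \<and> (\<forall>x y. Lam_tilde k Q f R x y \<le> 2 * (1/2) ^ F k 0)
         \<and> Metric_space.mcomplete (UNIV :: (nat \<Rightarrow> 'w) set) (Lam_tilde k Q f R)
         \<and> strongly_rigid (Lam_tilde k Q f R)"
proof -
  interpret gauge_metric k Q S R
    using Q R by unfold_locales
  have "topspace (baire_top :: (nat \<Rightarrow> 'w) topology) = UNIV"
    by (simp add: baire_top_def PiE_UNIV_domain)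
  then have "Lam_tilde k Q f R \<in> Met (baire_top :: (nat \<Rightarrow> 'w) topology)"
    unfolding Met_def
    using mtopology_eq_baire_top[OF Lam_tilde_metric Lam_tilde_close Lam_tilde_separate]
      Lam_tilde_metric by simp
  moreover have "Lam_tilde k Q f R x y \<le> 2 * (1/2) ^ F k 0" for x y
    using Lam_le by (simp add: Lam_tilde_def lam_def)
  ultimately show ?thesis
    using mcomplete_if_prefix_controlled[OF Lam_tilde_metric Lam_tilde_close Lam_tilde_separate]
      Lam_tilde_strongly_rigid[OF f_inj] by blast
qed

end
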